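(* Let $p\ge1$, $m\in\mathbb{N}$, $a,b>0$, $\beta\in\mathbb{R}^p$, let $\xi$ be a design on $\mathcal{X}$, and define $$L(\xi;\beta)=I-\frac{M_{Po}(\xi;\beta)e_1e_1^T}{e_1^TM_{Po}(\xi;\beta)e_1+\frac{b}{m}},$$ with $I$ the $p\times p$ identity matrix. Then: (i) $M(\xi;\beta)=\frac{a}{b}L(\xi;\beta)M_{Po}(\xi;\beta)=\frac{a}{b}M_{Po}(\xi;\beta)L(\xi;\beta)^T$; (ii) $L(\xi;\beta)$ is regular; (iii) $L(\xi;\beta)=I-\frac{m}{a}M(\xi;\beta)e_1e_1^T$.
   Context: Let $\mathcal{X}\subseteq\mathbb{R}^k$ be a design region and $f=(1,f_1,\ldots,f_{p-1})^T:\mathcal{X}\to\mathbb{R}^p$ a vector of regression functions whose first component is the constant 1. A design $\xi$ is a probability measure on $\mathcal{X}$ with finite support $x_1,\ldots,x_l$ and weights $w_1,\ldots,w_l\ge0$, $\sum_j w_j=1$. The Poisson information matrix is $M_{Po}(\xi;\beta)=\sum_{j=1}^l w_j\exp(f(x_j)^T\beta)f(x_j)f(x_j)^T$, and the Poisson–Gamma information matrix is $M(\xi;\beta)=\frac{a}{b}\Bigl(M_{Po}(\xi;\beta)-\frac{M_{Po}(\xi;\beta)e_1e_1^TM_{Po}(\xi;\beta)}{e_1^TM_{Po}(\xi;\beta)e_1+b/m}\Bigr)$, where $e_1$ is the first standard unit vector of $\mathbb{R}^p$. *)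

theory Defs
  imports "Jordan_Normal_Form.Matrix"
begin

definition outer :: "real vec \<Rightarrow> real vec \<Rightarrow> real mat" where
  "outer u v = mat (dim_vec u) (dim_vec v) (\<lambda>(i,j). u $ i * v $ j)"

(* first standard unit vector e_1 of R^p (index 0 in 0-based indexing) *)
definition e1 :: "nat \<Rightarrow> real vec" where
  "e1 p = unit_vec p 0"

(* design with support points xs 0..xs (l-1) and weights w 0..w (l-1) *)
definition is_design :: "'x set \<Rightarrow> nat \<Rightarrow> (nat \<Rightarrow> 'x) \<Rightarrow> (nat \<Rightarrow> real) \<Rightarrow> bool" where
  "is_design X l xs w \<longleftrightarrow> (\<forall>j<l. xs j \<in> X \<and> w j \<ge> 0) \<and> (\<Sum>j<l. w j) = 1"

definition M_Po :: "nat \<Rightarrow> ('x \<Rightarrow> real vec) \<Rightarrow> nat \<Rightarrow> (nat \<Rightarrow> 'x) \<Rightarrow> (nat \<Rightarrow> real)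
                     \<Rightarrow> real vec \<Rightarrow> real mat" where
  "M_Po p f l xs w \<beta> =
     mat p p (\<lambda>(i,k). \<Sum>j<l. w j * exp (f (xs j) \<bullet> \<beta>) * (f (xs j) $ i) * (f (xs j) $ k))"

definition M_PG :: "real \<Rightarrow> real \<Rightarrow> nat \<Rightarrow> nat \<Rightarrow> ('x \<Rightarrow> real vec) \<Rightarrow> nat \<Rightarrow> (nat \<Rightarrow> 'x)
                     \<Rightarrow> (nat \<Rightarrow> real) \<Rightarrow> real vec \<Rightarrow> real mat" where
  "M_PG a b m p f l xs w \<beta> =
     (let MP = M_Po p f l xs w \<beta>; e = e1 p in
      (a / b) \<cdot>\<^sub>m (MP - (1 / (e \<bullet> (MP *\<^sub>v e) + b / real m)) \<cdot>\<^sub>m (MP * outer e e * MP)))"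

definition L_mat :: "real \<Rightarrow> nat \<Rightarrow> nat \<Rightarrow> ('x \<Rightarrow> real vec) \<Rightarrow> nat \<Rightarrow> (nat \<Rightarrow> 'x)
                     \<Rightarrow> (nat \<Rightarrow> real) \<Rightarrow> real vec \<Rightarrow> real mat" where
  "L_mat b m p f l xs w \<beta> =
     (let MP = M_Po p f l xs w \<beta>; e = e1 p in
      1\<^sub>m p - (1 / (e \<bullet> (MP *\<^sub>v e) + b / real m)) \<cdot>\<^sub>m (MP * outer e e))"

end

theory Submission
  imports Defs
begin

(* Write u = M_Po e1 and s = e1 \<bullet> u = (M_Po)_00 \<ge> 0.  Everything is a rank-one perturbation:
   M_Po e1 e1^T = u e1^T and, M_Po being symmetric, M_Po e1 e1^T M_Po = u u^T.  So with
   c = 1 / (s + b/m) both L M_Po and M_Po L^T equal M_Po - c u u^T, which is (i).  L = I - c u e1^T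
   is invertible by Sherman-Morrison because c s < 1, which is (ii).  Finally the Poisson-Gamma
   matrix satisfies M e1 e1^T = (a/b) (1 - c s) u e1^T, and (m/b) (1 - c s) = c gives (iii). *)

lemma outer_carrier [simp]: "outer u v \<in> carrier_mat (dim_vec u) (dim_vec v)"
  by (simp add: outer_def)

lemma dim_row_outer [simp]: "dim_row (outer u v) = dim_vec u"
  and dim_col_outer [simp]: "dim_col (outer u v) = dim_vec v"
  by (simp_all add: outer_def)

lemma index_outer [simp]:
  "i < dim_vec u \<Longrightarrow> j < dim_vec v \<Longrightarrow> outer u v $$ (i, j) = u $ i * v $ j"
  by (simp add: outer_def)

lemma mult_outer:
  assumes "A \<in> carrier_mat n (dim_vec u)"
  shows "A * outer u v = outer (A *\<^sub>v u) v"
  by (rule eq_matI) (use assms in \<open>auto simp: scalar_prod_def sum_distrib_right mult.assoc\<close>)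

lemma outer_mult:
  assumes "A \<in> carrier_mat (dim_vec v) n"
  shows "outer u v * A = outer u (A\<^sup>T *\<^sub>v v)"
  by (rule eq_matI) (use assms in \<open>auto simp: scalar_prod_def sum_distrib_left ac_simps\<close>)

lemma outer_mult_outer:
  assumes "dim_vec v = dim_vec x"
  shows "outer u v * outer x y = (v \<bullet> x) \<cdot>\<^sub>m outer u y"
  by (rule eq_matI) (use assms in \<open>auto simp: scalar_prod_def sum_distrib_left sum_distrib_right ac_simps\<close>)

lemma one_plus_outer_mult:
  fixes u v :: "real vec"
  assumes "u \<in> carrier_vec n" "v \<in> carrier_vec n"
  shows "(1\<^sub>m n + x \<cdot>\<^sub>m outer u v) * (1\<^sub>m n + y \<cdot>\<^sub>m outer u v)
       = 1\<^sub>m n + (x + y + x * y * (v \<bullet> u)) \<cdot>\<^sub>m outer u v"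
proof -
  let ?O = "outer u v"
  have dims: "dim_vec u = n" "dim_vec v = n" using assms by auto
  then have O: "?O \<in> carrier_mat n n" by (metis outer_carrier)
  have "(1\<^sub>m n + x \<cdot>\<^sub>m ?O) * (1\<^sub>m n + y \<cdot>\<^sub>m ?O)
      = (1\<^sub>m n + x \<cdot>\<^sub>m ?O) + (1\<^sub>m n + x \<cdot>\<^sub>m ?O) * (y \<cdot>\<^sub>m ?O)"
    using O by (subst mult_add_distrib_mat[of _ n n]) auto
  also have "(1\<^sub>m n + x \<cdot>\<^sub>m ?O) * (y \<cdot>\<^sub>m ?O) = 1\<^sub>m n * (y \<cdot>\<^sub>m ?O) + (x \<cdot>\<^sub>m ?O) * (y \<cdot>\<^sub>m ?O)"
    by (rule add_mult_distrib_mat[of _ n n _ _ n]) (use O in auto)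
  also have "\<dots> = y \<cdot>\<^sub>m ?O + x \<cdot>\<^sub>m (y \<cdot>\<^sub>m (?O * ?O))"
    using O dims by (simp add: mult_smult_distrib[OF O O] mult_smult_assoc_mat[OF O smult_carrier_mat[OF O]])
  also have "?O * ?O = (v \<bullet> u) \<cdot>\<^sub>m ?O"
    using assms by (simp add: outer_mult_outer)
  finally show ?thesis
    by - (rule eq_matI, use O in \<open>auto simp: algebra_simps\<close>)
qed

lemma invertible_one_minus_outer:
  fixes u v :: "real vec"
  assumes u: "u \<in> carrier_vec n" and v: "v \<in> carrier_vec n" and nondeg: "c * (v \<bullet> u) \<noteq> 1"
  shows "invertible_mat (1\<^sub>m n - c \<cdot>\<^sub>m outer u v)"
proof -
  let ?P = "\<lambda>x. 1\<^sub>m n + x \<cdot>\<^sub>m outer u v"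
  define t where "t = c / (1 - c * (v \<bullet> u))"
  have "- c + t + - c * t * (v \<bullet> u) = 0" and "t + - c + t * - c * (v \<bullet> u) = 0"
    using nondeg unfolding t_def by (simp_all add: field_simps)
  moreover have "?P 0 = 1\<^sub>m n"
    by (rule eq_matI) (use u v in auto)
  ultimately have "?P (- c) * ?P t = 1\<^sub>m n" and "?P t * ?P (- c) = 1\<^sub>m n"
    by (simp_all only: one_plus_outer_mult[OF u v])
  moreover have "1\<^sub>m n - c \<cdot>\<^sub>m outer u v = ?P (- c)"
    by (rule eq_matI) (use u v in auto)
  ultimately show ?thesis
    using u v by (auto simp: invertible_mat_def inverts_mat_def intro!: exI[of _ "?P t"])
qed

lemma transpose_one_minus_outer:
  assumes "u \<in> carrier_vec n" "v \<in> carrier_vec n"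
  shows "(1\<^sub>m n - c \<cdot>\<^sub>m outer u v)\<^sup>T = 1\<^sub>m n - c \<cdot>\<^sub>m outer v u"
  by (rule eq_matI) (use assms in auto)

lemma one_minus_outer_mult:
  assumes "u \<in> carrier_vec n" "v \<in> carrier_vec n" and A: "A \<in> carrier_mat n k"
  shows "(1\<^sub>m n - c \<cdot>\<^sub>m outer u v) * A = A - c \<cdot>\<^sub>m (outer u v * A)"
proof -
  have O: "outer u v \<in> carrier_mat n n" using assms by (metis outer_carrier carrier_vecD)
  show ?thesis
    using minus_mult_distrib_mat[OF one_carrier_mat smult_carrier_mat[OF O] A]
    by (simp add: left_mult_one_mat[OF A] mult_smult_assoc_mat[OF O A])
qed

lemma mult_one_minus_outer:
  assumes "u \<in> carrier_vec n" "v \<in> carrier_vec n" and A: "A \<in> carrier_mat k n"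
  shows "A * (1\<^sub>m n - c \<cdot>\<^sub>m outer u v) = A - c \<cdot>\<^sub>m (A * outer u v)"
proof -
  have O: "outer u v \<in> carrier_mat n n" using assms by (metis outer_carrier carrier_vecD)
  show ?thesis
    using mult_minus_distrib_mat[OF A one_carrier_mat smult_carrier_mat[OF O]]
    by (simp add: right_mult_one_mat[OF A] mult_smult_distrib[OF A O])
qed

lemma rank_one_downdate_factor:
  fixes M :: "real mat"
  assumes M: "M \<in> carrier_mat n n" and sym: "M\<^sup>T = M" and e: "e \<in> carrier_vec n"
  shows "M - c \<cdot>\<^sub>m (M * outer e e * M) = (1\<^sub>m n - c \<cdot>\<^sub>m (M * outer e e)) * M"
    and "M - c \<cdot>\<^sub>m (M * outer e e * M) = M * (1\<^sub>m n - c \<cdot>\<^sub>m (M * outer e e))\<^sup>T"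
proof -
  let ?u = "M *\<^sub>v e"
  have u: "?u \<in> carrier_vec n" using M e by simp
  have "M * outer e e = outer ?u e" and "M * outer e ?u = outer ?u ?u"
    using mult_outer[of M n e] M e by auto
  moreover have "outer ?u e * M = outer ?u ?u"
    using outer_mult[of M e n ?u] M e sym by simp
  ultimately show "M - c \<cdot>\<^sub>m (M * outer e e * M) = (1\<^sub>m n - c \<cdot>\<^sub>m (M * outer e e)) * M"
    and "M - c \<cdot>\<^sub>m (M * outer e e * M) = M * (1\<^sub>m n - c \<cdot>\<^sub>m (M * outer e e))\<^sup>T"
    by (simp_all add: one_minus_outer_mult[OF u e M] transpose_one_minus_outer[OF u e]
        mult_one_minus_outer[OF e u M])
qed

lemma invertible_downdate_factor:
  fixes M :: "real mat"
  assumes M: "M \<in> carrier_mat n n" and e: "e \<in> carrier_vec n"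
    and s: "0 \<le> e \<bullet> (M *\<^sub>v e)" and r: "0 < r"
  shows "invertible_mat (1\<^sub>m n - (1 / (e \<bullet> (M *\<^sub>v e) + r)) \<cdot>\<^sub>m (M * outer e e))"
proof -
  have "M * outer e e = outer (M *\<^sub>v e) e"
    using mult_outer[of M n e] M e by auto
  moreover have "1 / (e \<bullet> (M *\<^sub>v e) + r) * (e \<bullet> (M *\<^sub>v e)) \<noteq> 1"
    using s r by (simp add: field_simps)
  ultimately show ?thesis
    using invertible_one_minus_outer M e by simp
qed

lemma scaled_downdate_mult_outer:
  fixes M :: "real mat" and a b :: real and m :: nat
  assumes M: "M \<in> carrier_mat n n" and sym: "M\<^sup>T = M" and e: "e \<in> carrier_vec n" "e \<bullet> e = 1"
    and a: "a \<noteq> 0" and b: "b \<noteq> 0" and m: "m \<noteq> 0" and d: "e \<bullet> (M *\<^sub>v e) + b / real m \<noteq> 0"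
  defines "c \<equiv> 1 / (e \<bullet> (M *\<^sub>v e) + b / real m)"
  shows "(real m / a) \<cdot>\<^sub>m ((a / b) \<cdot>\<^sub>m (M - c \<cdot>\<^sub>m (M * outer e e * M)) * outer e e)
       = c \<cdot>\<^sub>m (M * outer e e)"
proof -
  let ?u = "M *\<^sub>v e" and ?E = "outer e e"
  let ?s = "e \<bullet> ?u"
  have u: "?u \<in> carrier_vec n" using M e by simp
  have E: "?E \<in> carrier_mat n n" using e by (metis outer_carrier carrier_vecD)
  have U: "outer ?u ?u \<in> carrier_mat n n" using u by (metis outer_carrier carrier_vecD)
  have X: "M - c \<cdot>\<^sub>m (M * ?E * M) \<in> carrier_mat n n"
    using M E by (intro minus_carrier_mat smult_carrier_mat mult_carrier_mat)
  have ME: "M * ?E = outer ?u e"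
    using mult_outer[of M n e] M e by auto
  moreover have "outer ?u e * M = outer ?u ?u"
    using outer_mult[of M e n ?u] M e sym by simp
  ultimately have "(M - c \<cdot>\<^sub>m (M * ?E * M)) * ?E = outer ?u e - c \<cdot>\<^sub>m (outer ?u ?u * ?E)"
    using minus_mult_distrib_mat[OF M smult_carrier_mat[OF U] E] mult_smult_assoc_mat[OF U E] by simp
  also have "outer ?u ?u * ?E = ?s \<cdot>\<^sub>m outer ?u e"
    by (subst outer_mult_outer) (use M e comm_scalar_prod[OF u e(1)] in auto)
  finally have "(real m / a) \<cdot>\<^sub>m ((a / b) \<cdot>\<^sub>m (M - c \<cdot>\<^sub>m (M * ?E * M)) * ?E)
      = (real m / a) \<cdot>\<^sub>m ((a / b) \<cdot>\<^sub>m (outer ?u e - c \<cdot>\<^sub>m (?s \<cdot>\<^sub>m outer ?u e)))"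
    by (simp add: mult_smult_assoc_mat[OF X E])
  also have "\<dots> = c \<cdot>\<^sub>m outer ?u e"
  proof -
    have k: "real m / a * (a / b * (1 - c * ?s)) = c"
      using a b m d unfolding c_def by (simp add: field_simps)
    have "real m / a * (a / b * (x - c * (?s * x))) = c * x" for x
    proof -
      have "real m / a * (a / b * (x - c * (?s * x))) = real m / a * (a / b * (1 - c * ?s)) * x"
        by (simp add: algebra_simps)
      also have "\<dots> = c * x" by (simp only: k)
      finally show ?thesis .
    qed
    then show ?thesis
      by - (rule eq_matI, use u e in auto)
  qed
  finally show ?thesis
    unfolding ME .
qed

lemma M_Po_carrier: "M_Po p f l xs w \<beta> \<in> carrier_mat p p"
  by (simp add: M_Po_def)

lemma transpose_M_Po: "(M_Po p f l xs w \<beta>)\<^sup>T = M_Po p f l xs w \<beta>"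
  by (rule eq_matI) (auto simp: M_Po_def ac_simps)

lemma M_Po_diag_nonneg:
  assumes "\<forall>j<l. 0 \<le> w j" "i < p"
  shows "0 \<le> M_Po p f l xs w \<beta> $$ (i, i)"
  using assms by (auto simp: M_Po_def mult.assoc intro!: sum_nonneg mult_nonneg_nonneg[of "w _"])

theorem lemma3:
  fixes X :: "'x set" and f :: "'x \<Rightarrow> real vec" and p m l :: nat
    and a b :: real and \<beta> :: "real vec" and xs :: "nat \<Rightarrow> 'x" and w :: "nat \<Rightarrow> real"
  assumes "p \<ge> 1" and "m \<ge> 1" and "a > 0" and "b > 0"
    and "dim_vec \<beta> = p"
    and "\<forall>x\<in>X. dim_vec (f x) = p \<and> f x $ 0 = 1"
    and "is_design X l xs w"
  shows "M_PG a b m p f l xs w \<beta> = (a / b) \<cdot>\<^sub>m (L_mat b m p f l xs w \<beta> * M_Po p f l xs w \<beta>)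
       \<and> M_PG a b m p f l xs w \<beta> = (a / b) \<cdot>\<^sub>m (M_Po p f l xs w \<beta> * (L_mat b m p f l xs w \<beta>)\<^sup>T)
       \<and> invertible_mat (L_mat b m p f l xs w \<beta>)
       \<and> L_mat b m p f l xs w \<beta> = 1\<^sub>m p - (real m / a) \<cdot>\<^sub>m (M_PG a b m p f l xs w \<beta> * outer (e1 p) (e1 p))"
proof -
  let ?M = "M_Po p f l xs w \<beta>" and ?e = "e1 p"
  have p: "0 < p" and m: "m \<noteq> 0" using assms(1,2) by auto
  have M: "?M \<in> carrier_mat p p" and sym: "?M\<^sup>T = ?M"
    by (rule M_Po_carrier, rule transpose_M_Po)
  have e: "?e \<in> carrier_vec p" "?e \<bullet> ?e = 1"
    using p by (simp_all add: e1_def)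
  have "?e \<bullet> (?M *\<^sub>v ?e) = ?M $$ (0, 0)"
    using M p by (simp add: e1_def)
  also have "\<dots> \<ge> 0"
    using assms(7) p by (intro M_Po_diag_nonneg) (auto simp: is_design_def)
  finally have s: "0 \<le> ?e \<bullet> (?M *\<^sub>v ?e)" .
  have r: "0 < b / real m" using assms(2,4) by simp
  show ?thesis
    unfolding M_PG_def L_mat_def Let_def
    using rank_one_downdate_factor[OF M sym e(1)] invertible_downdate_factor[OF M e(1) s r]
      scaled_downdate_mult_outer[OF M sym e _ _ m] s r assms(3,4)
    by (simp add: add_nonneg_pos)
qed

end
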